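(* Let $n\ge 1$, let $A^*\in\mathbb{R}^{n\times n}$ and $b^*\in\mathbb{R}^n$, and consider the closed-loop affine system $\dot{x}=A^*x+b^*$ on $\mathbb{R}^n$. (This is the system $\dot{x}_m=A_mx_m+B_mu_m$ under an affine feedback with $B_mu_m=B_{m1}x_m+B_{m2}$, so that $A^*=A_m+B_{m1}$ and $b^*=B_{m2}$.) Let $R_k=\{x\in\mathbb{R}^n: a^k_j\le x_j\le b^k_j \text{ for all } j=1,\dots,n\}$ with $a^k_j<b^k_j$ for all $j$, and fix a transition direction $i\in\{1,\dots,n\}$. Let $e_{kl}=\{x\in R_k: x_i=b^k_i\}$ be the facet of $R_k$ shared with the neighbouring rectangle $R_l$, and $\overline{e_{kl}}=\{x\in R_k: x_i=a^k_i\}$ the opposite facet. Define $$C^*=\sum_{j=1,\,j\neq i}^{n}\min_{a^k_j\le y_j\le b^k_j}\big(A^*_{ij}\,y_j\big),\qquad\text{i.e. the $j$-th term is } A^*_{ij}a^k_j \text{ if } A^*_{ij}>0,\ A^*_{ij}b^k_j \text{ if } A^*_{ij}<0,\ 0 \text{ if } A^*_{ij}=0,$$ and set $x^0=a^k_i$, $x^1=b^k_i$. Assume $A^*_{ii}\neq 0$ and $A^*_{ii}y+C^*+b^*_i>0$ for all $y\in[x^0,x^1]$. Let $x(\cdot)$ be the solution with $x(0)\in\overline{e_{kl}}$, and assume that $e_{kl}$ is reached without leaving $R_k$ in the following sense: for every $t\ge 0$ such that $x_i(s)<b^k_i$ for all $s\in[0,t]$, one has $x(t)\in R_k$. Then there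 exists $t_1$ with $$0\le t_1\le T^{max}:=\frac{1}{A^*_{ii}}\ln\!\left(\frac{A^*_{ii}x^1+C^*+b^*_i}{A^*_{ii}x^0+C^*+b^*_i}\right)$$ such that $x_i(t_1)=b^k_i$, i.e. the trajectory reaches the facet $e_{kl}$ (transition $R_k\to R_l$) within time $T^{max}$.
   Context: $A^*_{ij}$ denotes the $(i,j)$ entry of $A^*$ and $b^*_i$, $x_i$ the $i$-th entries of the vectors $b^*$, $x$. The rectangles $R_k$ are cells of a partition of the workspace used to abstract an agent's motion into a weighted transition system; $T^{max}$ is used as the weight (maximum transition time) of the transition $R_k\to R_l$ across their common facet in the positive direction of coordinate $i$. *)

theory Defs
  imports "HOL-Analysis.Analysis"
begin

definition rect :: "real^'n \<Rightarrow> real^'n \<Rightarrow> (real^'n) set" where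
  "rect ak bk = {x. \<forall>j. ak $ j \<le> x $ j \<and> x $ j \<le> bk $ j}"

definition Cterm :: "real \<Rightarrow> real \<Rightarrow> real \<Rightarrow> real" where
  "Cterm c lo hi = (if c > 0 then c * lo else if c < 0 then c * hi else 0)"

definition C_star :: "real^'n^'n \<Rightarrow> real^'n \<Rightarrow> real^'n \<Rightarrow> 'n \<Rightarrow> real" where
  "C_star A ak bk i = (\<Sum>j\<in>UNIV - {i}. Cterm (A $ i $ j) (ak $ j) (bk $ j))"

definition T_max :: "real^'n^'n \<Rightarrow> real^'n \<Rightarrow> real^'n \<Rightarrow> real^'n \<Rightarrow> 'n \<Rightarrow> real" where
  "T_max A b ak bk i =
     (1 / A $ i $ i) * ln ((A $ i $ i * bk $ i + C_star A ak bk i + b $ i) /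
                           (A $ i $ i * ak $ i + C_star A ak bk i + b $ i))"

end

theory Submission
  imports Defs
begin

text \<open>On the rectangle the i-th velocity component is bounded below by the scalar affine
  field g(y) = A_ii y + C* + b_i, which is positive on [a_i, b_i]. Along an exact solution of
  y' = g(y) the quantity ln (g y) / A_ii - t is constant; along a super-solution it is
  nondecreasing. As y \<mapsto> ln (g y) / A_ii is strictly increasing whatever the sign of A_ii,
  a trajectory staying below b_i until time T_max would gain more than the difference of this
  quantity between the two facets, which is impossible.\<close>

lemma Cterm_le_mult:
  assumes "lo \<le> y" "y \<le> hi"
  shows "Cterm c lo hi \<le> c * y"
  using assms unfolding Cterm_def by (auto intro: mult_left_mono mult_left_mono_neg)

lemma C_star_le_row:
  assumes "x \<in> rect ak bk"
  shows "A $ i $ i * x $ i + C_star A ak bk i \<le> (A *v x) $ i"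
proof -
  have "C_star A ak bk i \<le> (\<Sum>j\<in>UNIV - {i}. A $ i $ j * x $ j)"
    unfolding C_star_def
    using assms by (intro sum_mono Cterm_le_mult) (auto simp: rect_def)
  also have "A $ i $ i * x $ i + \<dots> = (A *v x) $ i"
    by (simp add: matrix_vector_mult_def sum.remove)
  finally show ?thesis by simp
qed

lemma ln_affine_div_less:
  fixes a c y z :: real
  assumes "a \<noteq> 0" "0 < a * y + c" "0 < a * z + c" "y < z"
  shows "ln (a * y + c) / a < ln (a * z + c) / a"
proof (cases "a > 0")
  case True
  then show ?thesis using assms by (simp add: divide_strict_right_mono)
next
  case False
  then have "a < 0" using assms(1) by simp
  then show ?thesis using assms by (simp add: mult_less_cancel_left divide_strict_right_mono_neg)
qed

lemma ln_affine_div_growth: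
  fixes xi xi' :: "real \<Rightarrow> real"
  assumes "a \<noteq> 0" "0 \<le> T"
    and "continuous_on {0..T} xi"
    and "\<And>t. 0 < t \<Longrightarrow> t < T \<Longrightarrow> (xi has_real_derivative xi' t) (at t)"
    and "\<And>t. 0 < t \<Longrightarrow> t < T \<Longrightarrow> a * xi t + c \<le> xi' t"
    and "\<And>t. 0 \<le> t \<Longrightarrow> t \<le> T \<Longrightarrow> 0 < a * xi t + c"
  shows "ln (a * xi 0 + c) / a + T \<le> ln (a * xi T + c) / a"
proof -
  define H where "H t = ln (a * xi t + c) / a - t" for t
  have "H 0 \<le> H T"
  proof (rule DERIV_nonneg_imp_increasing_open[OF \<open>0 \<le> T\<close>])
    fix t assume t: "0 < t" "t < T"
    have g: "0 < a * xi t + c" using assms(6) t by simp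
    have "(H has_real_derivative (a * xi' t / (a * xi t + c)) / a - 1) (at t)"
      unfolding H_def using g by (auto intro!: derivative_eq_intros assms(4) t)
    moreover have "(a * xi' t / (a * xi t + c)) / a - 1 = xi' t / (a * xi t + c) - 1"
      using \<open>a \<noteq> 0\<close> by simp
    moreover have "1 \<le> xi' t / (a * xi t + c)"
      using assms(5)[OF t] g by simp
    ultimately show "\<exists>y. (H has_real_derivative y) (at t) \<and> 0 \<le> y" by force
  next
    have "\<forall>t\<in>{0..T}. a * xi t + c \<noteq> 0" using assms(6) by force
    then show "continuous_on {0..T} H"
      unfolding H_def using assms(1,3) by (auto intro!: continuous_intros)
  qed
  then show ?thesis by (simp add: H_def)
qed

lemma affine_super_solution_reaches_level:
  fixes xi xi' :: "real \<Rightarrow> real"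
  assumes "a \<noteq> 0" "lo \<le> hi"
    and pos: "\<forall>y\<in>{lo..hi}. 0 < a * y + c"
    and deriv: "\<forall>t\<ge>0. (xi has_real_derivative xi' t) (at t within {0..})"
    and init: "xi 0 = lo"
    and below_hi: "\<forall>t\<ge>0. (\<forall>s\<in>{0..t}. xi s < hi) \<longrightarrow> lo \<le> xi t \<and> a * xi t + c \<le> xi' t"
  shows "\<exists>t1. 0 \<le> t1 \<and> t1 \<le> (ln (a * hi + c) - ln (a * lo + c)) / a \<and> xi t1 = hi"
proof (rule ccontr)
  assume no_hit: "\<not> ?thesis"
  define L where "L y = ln (a * y + c) / a" for y
  define T where "T = (ln (a * hi + c) - ln (a * lo + c)) / a"
  have T_eq: "T = L hi - L lo" by (simp add: T_def L_def diff_divide_distrib)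
  have "0 \<le> T"
    using \<open>lo \<le> hi\<close> ln_affine_div_less[OF \<open>a \<noteq> 0\<close>] pos
    by (cases "lo = hi") (auto simp: T_eq L_def less_imp_le)
  have cont: "continuous_on {0..} xi"
    using deriv by (intro DERIV_continuous_on) auto
  have less_hi: "xi t < hi" if "0 \<le> t" "t \<le> T" for t
  proof (rule ccontr)
    assume "\<not> xi t < hi"
    moreover have "continuous_on {0..t} xi" using cont by (rule continuous_on_subset) auto
    ultimately obtain s where "0 \<le> s" "s \<le> t" "xi s = hi"
      using IVT'[of xi 0 hi t] \<open>0 \<le> t\<close> init \<open>lo \<le> hi\<close> by auto
    then show False using no_hit that by (auto simp: T_def)
  qed
  have in_range: "lo \<le> xi t" "a * xi t + c \<le> xi' t" if "0 \<le> t" "t \<le> T" for t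
    using below_hi less_hi that by auto
  have "L lo + T \<le> L (xi T)"
    unfolding L_def init[symmetric]
  proof (rule ln_affine_div_growth[OF \<open>a \<noteq> 0\<close> \<open>0 \<le> T\<close>])
    show "continuous_on {0..T} xi" using cont by (rule continuous_on_subset) auto
    show "(xi has_real_derivative xi' t) (at t)" if "0 < t" for t
      using deriv[rule_format, of t] that at_within_interior[of t "{0..}"] by auto
    show "0 < a * xi t + c" if "0 \<le> t" "t \<le> T" for t
      using pos in_range(1) less_hi that by force
  qed (use in_range in auto)
  moreover have "L (xi T) < L hi"
  proof -
    have "lo \<le> xi T" "xi T < hi" using in_range(1) less_hi \<open>0 \<le> T\<close> by auto
    then show ?thesis
      unfolding L_def using pos \<open>lo \<le> hi\<close> by (intro ln_affine_div_less[OF \<open>a \<noteq> 0\<close>]) auto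
  qed
  ultimately show False by (simp add: T_eq)
qed

theorem theorem1:
  fixes A :: "real^'n^'n" and b :: "real^'n"
    and ak bk :: "real^'n" and i :: 'n
    and x :: "real \<Rightarrow> real^'n"
  assumes rect_nondeg: "\<forall>j. ak $ j < bk $ j"
    and Aii: "A $ i $ i \<noteq> 0"
    and pos: "\<forall>y\<in>{ak $ i .. bk $ i}. A $ i $ i * y + C_star A ak bk i + b $ i > 0"
    and ode: "\<forall>t\<ge>0. (x has_vector_derivative (A *v x t + b)) (at t within {0..})"
    and init: "x 0 \<in> rect ak bk" "x 0 $ i = ak $ i"
    and stay: "\<forall>t\<ge>0. (\<forall>s\<in>{0..t}. x s $ i < bk $ i) \<longrightarrow> x t \<in> rect ak bk"
  shows "\<exists>t1. 0 \<le> t1 \<and> t1 \<le> T_max A b ak bk i \<and> x t1 $ i = bk $ i"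
proof -
  define c where "c = C_star A ak bk i + b $ i"
  have pos_c: "\<forall>y\<in>{ak $ i .. bk $ i}. 0 < A $ i $ i * y + c"
    using pos by (simp add: c_def add.assoc)
  have "0 < A $ i $ i * ak $ i + c" "0 < A $ i $ i * bk $ i + c"
    using pos_c rect_nondeg[rule_format, of i] by auto
  then have T_max_eq: "T_max A b ak bk i
      = (ln (A $ i $ i * bk $ i + c) - ln (A $ i $ i * ak $ i + c)) / A $ i $ i"
    by (simp add: T_max_def c_def add.assoc ln_div)
  have deriv: "\<forall>t\<ge>0. ((\<lambda>t. x t $ i) has_real_derivative (A *v x t + b) $ i) (at t within {0..})"
    using bounded_linear.has_vector_derivative[OF bounded_linear_vec_nth] ode
    unfolding has_real_derivative_iff_has_vector_derivative by blast
  have "\<forall>t\<ge>0. (\<forall>s\<in>{0..t}. x s $ i < bk $ i) \<longrightarrow>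
      ak $ i \<le> x t $ i \<and> A $ i $ i * x t $ i + c \<le> (A *v x t + b) $ i"
    using stay C_star_le_row by (fastforce simp: rect_def c_def)
  from affine_super_solution_reaches_level[OF Aii less_imp_le[OF rect_nondeg[rule_format]]
      pos_c deriv init(2) this]
  show ?thesis unfolding T_max_eq .
qed

end
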